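(* Let $\xi$ be an $(I,T)$-system with the stuttering property, and let $n\ge 0$. Then $d(I,T) \leq n$ if and only if the formula $I(S_1)$ is redundant in $\exists S_0\cdots\exists S_n\,[\,I(S_0)\wedge I(S_1) \wedge T_{0,1}\wedge\dots\wedge T_{n,n+1}\,]$, i.e. if and only if $$\exists S_0\cdots\exists S_n\,[\,I(S_0)\wedge T_{0,1}\wedge\dots\wedge T_{n,n+1}\,] \;\equiv\; \exists S_0\cdots\exists S_n\,[\,I(S_0)\wedge I(S_1)\wedge T_{0,1}\wedge\dots\wedge T_{n,n+1}\,]$$ as Boolean functions of $S_{n+1}$.
   Context: An $(I,T)$-system is a transition system over a finite set $S$ of Boolean state variables, given by a propositional formula $I(S)$ (initial states) and a propositional formula $T(S,S')$ (transition relation), where $S'$ is a copy of $S$. A state is a complete assignment to $S$. A trace $(s_0,\dots,s_k)$ is valid if $I(s_0)=1$ and $T(s_i,s_{i+1})=1$ for $i=0,\dots,k-1$; then $s_k$ is reachable in $k$ transitions. The system has the stuttering property if $T(s,s)=1$ for every state $s$. The reachability diameter $d(I,T)$ is the smallest $n\ge0$ such that every state reachable in some number of transitions is reachable in at most $n$ transitions. Notation: $S_j$ is a copy of the state variables for time frame $j$; $T_{j,j+1}$ denotes $T(S_j,S_{j+1})$; $I(S_0)$, $I(S_1)$ are copies of $I$ over $S_0$, $S_1$. A conjunct $A$ is redundant in $\exists W[A\wedge B]$ if $\exists W[A\wedge B]\equiv\exists W[B]$, where $\equiv$ means equality as Boolean functions of the free variables. *)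

theory Defs
  imports Main
begin

text \<open>States are complete assignments to a finite set of Boolean state variables,
  modelled as functions from a finite type of variables to bool.
  The formulas I(S) and T(S,S') are represented by the Boolean functions they denote.\<close>

type_synonym 'v state = "'v \<Rightarrow> bool"

definition stuttering :: "('v state \<Rightarrow> 'v state \<Rightarrow> bool) \<Rightarrow> bool" where
  "stuttering T \<longleftrightarrow> (\<forall>s. T s s)"

definition reachable_in :: "('v state \<Rightarrow> bool) \<Rightarrow> ('v state \<Rightarrow> 'v state \<Rightarrow> bool) \<Rightarrow> nat \<Rightarrow> 'v state \<Rightarrow> bool" where
  "reachable_in I T k s \<longleftrightarrow>
     (\<exists>tr :: nat \<Rightarrow> 'v state. I (tr 0) \<and> (\<forall>i<k. T (tr i) (tr (Suc i))) \<and> tr k = s)"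

definition reachable :: "('v state \<Rightarrow> bool) \<Rightarrow> ('v state \<Rightarrow> 'v state \<Rightarrow> bool) \<Rightarrow> 'v state \<Rightarrow> bool" where
  "reachable I T s \<longleftrightarrow> (\<exists>k. reachable_in I T k s)"

definition diameter :: "('v state \<Rightarrow> bool) \<Rightarrow> ('v state \<Rightarrow> 'v state \<Rightarrow> bool) \<Rightarrow> nat" where
  "diameter I T = (LEAST n. \<forall>s. reachable I T s \<longrightarrow> (\<exists>k\<le>n. reachable_in I T k s))"

end

theory Submission
  imports Defs
begin

text \<open>With stuttering, a state reachable in k transitions is reachable in every m \<ge> k, so the
  sets of states reachable in exactly k transitions increase with k, and d(I,T) \<le> n holds
  iff this chain is already stable at n, i.e. iff the states reachable in n+1 transitions are
  those reachable in n. The left formula describes the states reachable in n+1 transitions;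
  in the right one the first transition is forced from an initial state into an initial state,
  which by stuttering is no restriction beyond dropping it, so it describes the states
  reachable in n transitions.\<close>

lemma reachable_in_Suc:
  "reachable_in I T (Suc k) t \<longleftrightarrow> (\<exists>s. reachable_in I T k s \<and> T s t)"
proof
  assume "reachable_in I T (Suc k) t"
  then obtain tr where tr: "I (tr 0)" "\<forall>i<Suc k. T (tr i) (tr (Suc i))" "tr (Suc k) = t"
    unfolding reachable_in_def by blast
  then have "reachable_in I T k (tr k)" unfolding reachable_in_def by auto
  with tr show "\<exists>s. reachable_in I T k s \<and> T s t" by auto
next
  assume "\<exists>s. reachable_in I T k s \<and> T s t"
  then obtain s tr where "T s t" "I (tr 0)" "\<forall>i<k. T (tr i) (tr (Suc i))" "tr k = s"
    unfolding reachable_in_def by blast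
  then show "reachable_in I T (Suc k) t"
    unfolding reachable_in_def by (intro exI[of _ "tr(Suc k := t)"]) (auto simp: less_Suc_eq)
qed

lemma reachable_in_mono:
  assumes "stuttering T" "k \<le> m" "reachable_in I T k s"
  shows "reachable_in I T m s"
  using assms(2,3)
proof (induction m)
  case (Suc m)
  with assms(1) show ?case
    by (cases "k = Suc m") (auto simp: reachable_in_Suc stuttering_def)
qed simp

lemma reachable_in_stable:
  assumes "reachable_in I T (Suc n) = reachable_in I T n"
  shows "reachable_in I T (n + j) = reachable_in I T n"
proof (induction j)
  case (Suc j)
  have "reachable_in I T (Suc (n + j)) = reachable_in I T (Suc n)"
    using Suc by (simp add: fun_eq_iff reachable_in_Suc)
  with assms show ?case by simp
qed simp

lemma bounded_reachability_iff_stable: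
  assumes "stuttering T"
  shows "(\<forall>s. reachable I T s \<longrightarrow> (\<exists>k\<le>n. reachable_in I T k s))
    \<longleftrightarrow> reachable_in I T (Suc n) = reachable_in I T n"
proof
  assume bounded: "\<forall>s. reachable I T s \<longrightarrow> (\<exists>k\<le>n. reachable_in I T k s)"
  show "reachable_in I T (Suc n) = reachable_in I T n"
  proof (intro ext iffI)
    fix s assume "reachable_in I T (Suc n) s"
    with bounded obtain k where "k \<le> n" "reachable_in I T k s"
      unfolding reachable_def by blast
    then show "reachable_in I T n s" using reachable_in_mono[OF assms] by blast
  qed (rule reachable_in_mono[OF assms, of n], simp)
next
  assume stable: "reachable_in I T (Suc n) = reachable_in I T n"
  have "reachable_in I T n s" if "reachable_in I T k s" for k s
  proof (cases "k \<le> n")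
    case True
    with that show ?thesis using reachable_in_mono[OF assms] by blast
  next
    case False
    then have "k = n + (k - n)" by simp
    with that show ?thesis using reachable_in_stable[OF stable, of "k - n"] by metis
  qed
  then show "\<forall>s. reachable I T s \<longrightarrow> (\<exists>k\<le>n. reachable_in I T k s)"
    unfolding reachable_def by blast
qed

lemma reachability_bounded_if_finite:
  assumes "finite {s. reachable I T s}"
  shows "\<exists>N. \<forall>s. reachable I T s \<longrightarrow> (\<exists>k\<le>N. reachable_in I T k s)"
proof -
  define depth where "depth s = (LEAST k. reachable_in I T k s)" for s
  have "\<exists>k\<le>Max (depth ` {s. reachable I T s}). reachable_in I T k s" if "reachable I T s" for s
  proof (intro exI conjI)
    show "reachable_in I T (depth s) s"
      using that unfolding depth_def reachable_def by (metis LeastI)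
    show "depth s \<le> Max (depth ` {s. reachable I T s})"
      using assms that by (intro Max_ge) auto
  qed
  then show ?thesis by blast
qed

lemma diameter_le_iff:
  assumes "finite {s. reachable I T s}"
  shows "diameter I T \<le> n \<longleftrightarrow> (\<forall>s. reachable I T s \<longrightarrow> (\<exists>k\<le>n. reachable_in I T k s))"
proof
  assume "diameter I T \<le> n"
  moreover have "\<forall>s. reachable I T s \<longrightarrow> (\<exists>k\<le>diameter I T. reachable_in I T k s)"
    unfolding diameter_def by (rule LeastI_ex[OF reachability_bounded_if_finite[OF assms]])
  ultimately show "\<forall>s. reachable I T s \<longrightarrow> (\<exists>k\<le>n. reachable_in I T k s)"
    using order_trans by blast
qed (simp add: diameter_def Least_le)

lemma reachable_in_Suc_iff_trace:
  "reachable_in I T (Suc n) x \<longleftrightarrow>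
    (\<exists>S. S (Suc n) = x \<and> I (S 0) \<and> (\<forall>i\<le>n. T (S i) (S (Suc i))))"
  unfolding reachable_in_def by (auto simp: less_Suc_eq_le)

lemma reachable_in_iff_trace_from_two_initial:
  assumes "stuttering T"
  shows "reachable_in I T n x \<longleftrightarrow>
    (\<exists>S. S (Suc n) = x \<and> I (S 0) \<and> I (S 1) \<and> (\<forall>i\<le>n. T (S i) (S (Suc i))))"
proof
  assume "reachable_in I T n x"
  then obtain tr where tr: "I (tr 0)" "\<forall>i<n. T (tr i) (tr (Suc i))" "tr n = x"
    unfolding reachable_in_def by blast
  define S where "S i = (case i of 0 \<Rightarrow> tr 0 | Suc j \<Rightarrow> tr j)" for i
  have "T (S i) (S (Suc i))" if "i \<le> n" for i
    using that tr(2) assms by (cases i) (auto simp: S_def stuttering_def)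
  with tr show "\<exists>S. S (Suc n) = x \<and> I (S 0) \<and> I (S 1) \<and> (\<forall>i\<le>n. T (S i) (S (Suc i)))"
    by (intro exI[of _ S]) (auto simp: S_def)
next
  assume "\<exists>S. S (Suc n) = x \<and> I (S 0) \<and> I (S 1) \<and> (\<forall>i\<le>n. T (S i) (S (Suc i)))"
  then obtain S where "S (Suc n) = x" "I (S 1)" "\<forall>i\<le>n. T (S i) (S (Suc i))" by blast
  then show "reachable_in I T n x"
    unfolding reachable_in_def by (intro exI[of _ "\<lambda>i. S (Suc i)"]) auto
qed

theorem proposition1:
  fixes I :: "('v::finite) state \<Rightarrow> bool"
    and T :: "'v state \<Rightarrow> 'v state \<Rightarrow> bool"
    and n :: nat
  assumes "stuttering T"
  shows "diameter I T \<le> n \<longleftrightarrow>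
    (\<forall>x :: 'v state.
       (\<exists>S :: nat \<Rightarrow> 'v state. S (Suc n) = x \<and> I (S 0) \<and> (\<forall>i\<le>n. T (S i) (S (Suc i))))
       \<longleftrightarrow>
       (\<exists>S :: nat \<Rightarrow> 'v state. S (Suc n) = x \<and> I (S 0) \<and> I (S 1) \<and> (\<forall>i\<le>n. T (S i) (S (Suc i)))))"
proof -
  have "diameter I T \<le> n \<longleftrightarrow> reachable_in I T (Suc n) = reachable_in I T n"
    using diameter_le_iff[of I T n] bounded_reachability_iff_stable[OF assms] by simp
  then show ?thesis
    by (simp add: fun_eq_iff reachable_in_Suc_iff_trace
        reachable_in_iff_trace_from_two_initial[OF assms])
qed

end
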